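(* In the two-dimensional setting below, let $u$ be a convex piecewise linear function with node values on $G^h$ (a convex piecewise affine function whose subgradient measure is concentrated on $G^h$). For $x\in G^h\cap X$ let $R^h_x=x+[-h/2,h/2]^2$. Then $$F^h_1(x,u(x),u(x)-u(\cdot))\;\le\;\frac{-\int_{\partial u(R^h_x)}g(y)\,dy+\int_{R^h_x}f(z)\,dz}{h^2}.$$
   Context: Setting: $n=2$, $X$ is a square, $f\ge0$ on $X$ and $g\ge0$ on $\mathbb{R}^2$ are Lipschitz continuous with Lipschitz constants $L_f,L_g$. $G^h$ consists of the uniform Cartesian grid of spacing $h$ in $\bar X$ together with additional points on $\partial X$. $e_1,e_2$ are the coordinate unit vectors. Finite differences: $\mathcal D^{\pm}_{x_j}u(x)=\pm(u(x\pm he_j)-u(x))/h$, $\mathcal D^0_{x_j}u(x)=(u(x+he_j)-u(x-he_j))/(2h)$, $\mathcal D_{x_jx_j}u(x)=(u(x+he_j)+u(x-he_j)-2u(x))/h^2$, $\Delta^hu=\mathcal D_{x_1x_1}u+\mathcal D_{x_2x_2}u$. A superbase of $\mathbb{Z}^2$ is a triple $(e,e',e'')\in(\mathbb{Z}^2)^3$ with $\det(e,e')=1$ and $e+e'+e''=0$. For a fixed positive integer parameter $N$, $\mathcal A^h_x$ is the set of superbases with $x\pm he,x\pm he',x\pm he''\in G^h$ and $\|e\|_\infty,\|e'\|_\infty,\|e''\|_\infty<\sqrt N$. Let $\Delta^h_{ee}u(x)=(u(x+he)+u(x-he)-2u(x))/h^2$ and $$\det{}^h(D^2u)(x)=\min_{(e,e',e'')\in\mathcal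 A^h_x}G(\max\{\Delta^h_{ee}u(x),0\},\max\{\Delta^h_{e'e'}u(x),0\},\max\{\Delta^h_{e''e''}u(x),0\}),$$ where $G(a,b,c)=bc$ if $a\ge b+c$; $ca$ if $b\ge c+a$; $ab$ if $c\ge a+b$; and $\tfrac12(ab+bc+ca)-\tfrac14(a^2+b^2+c^2)$ otherwise. Define $g^h(\nabla u)(x)=\max\{g(\mathcal D^0_{x_1}u(x),\mathcal D^0_{x_2}u(x))+hL_g\Delta^hu(x),0\}$, $f^h(x)=\max\{f(x)-hL_f/\sqrt2,0\}$, and $F^h_1(x,u(x),u(x)-u(\cdot))=-g^h(\nabla u)(x)\det{}^h(D^2u)(x)+f^h(x)$. *)

theory Defs
  imports "HOL-Analysis.Analysis"
begin

type_synonym pt = "real \<times> real"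

definition sqX :: "real \<Rightarrow> real \<Rightarrow> real \<Rightarrow> nat \<Rightarrow> pt set" where
  "sqX a1 a2 h K = {a1 <..< a1 + real K * h} \<times> {a2 <..< a2 + real K * h}"

definition gridG :: "real \<Rightarrow> real \<Rightarrow> real \<Rightarrow> nat \<Rightarrow> pt set \<Rightarrow> pt set" where
  "gridG a1 a2 h K B =
     {(a1 + h * real i, a2 + h * real j) | i j. i \<le> K \<and> j \<le> K} \<union> B"

definition hvec :: "real \<Rightarrow> int \<times> int \<Rightarrow> pt" where
  "hvec h e = (h * of_int (fst e), h * of_int (snd e))"

definition Dee :: "real \<Rightarrow> (pt \<Rightarrow> real) \<Rightarrow> pt \<Rightarrow> int \<times> int \<Rightarrow> real" where
  "Dee h u x e = (u (x + hvec h e) + u (x - hvec h e) - 2 * u x) / h^2"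

definition D0 :: "real \<Rightarrow> (pt \<Rightarrow> real) \<Rightarrow> pt \<Rightarrow> int \<times> int \<Rightarrow> real" where
  "D0 h u x e = (u (x + hvec h e) - u (x - hvec h e)) / (2 * h)"

definition LapH :: "real \<Rightarrow> (pt \<Rightarrow> real) \<Rightarrow> pt \<Rightarrow> real" where
  "LapH h u x = Dee h u x (1, 0) + Dee h u x (0, 1)"

definition superbase :: "(int \<times> int) \<Rightarrow> (int \<times> int) \<Rightarrow> (int \<times> int) \<Rightarrow> bool" where
  "superbase e e' e'' \<longleftrightarrow>
     fst e * snd e' - snd e * fst e' = 1 \<and>
     fst e + fst e' + fst e'' = 0 \<and> snd e + snd e' + snd e'' = 0"

definition supnorm :: "int \<times> int \<Rightarrow> int" where
  "supnorm e = max \<bar>fst e\<bar> \<bar>snd e\<bar>"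

definition admissible :: "real \<Rightarrow> pt set \<Rightarrow> nat \<Rightarrow> pt \<Rightarrow> ((int \<times> int) \<times> (int \<times> int) \<times> (int \<times> int)) set" where
  "admissible h G N x = {(e, e', e''). superbase e e' e'' \<and>
     (\<forall>v \<in> {e, e', e''}. x + hvec h v \<in> G \<and> x - hvec h v \<in> G \<and> real_of_int (supnorm v) < sqrt (real N))}"

definition Gfun :: "real \<Rightarrow> real \<Rightarrow> real \<Rightarrow> real" where
  "Gfun a b c =
    (if a \<ge> b + c then b * c
     else if b \<ge> c + a then c * a
     else if c \<ge> a + b then a * b
     else (a*b + b*c + c*a) / 2 - (a^2 + b^2 + c^2) / 4)"

definition detH :: "real \<Rightarrow> pt set \<Rightarrow> nat \<Rightarrow> (pt \<Rightarrow> real) \<Rightarrow> pt \<Rightarrow> real" where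
  "detH h G N u x = Min ((\<lambda>(e, e', e''). Gfun (max (Dee h u x e) 0) (max (Dee h u x e') 0) (max (Dee h u x e'') 0))
                          ` admissible h G N x)"

definition gH :: "real \<Rightarrow> real \<Rightarrow> (pt \<Rightarrow> real) \<Rightarrow> (pt \<Rightarrow> real) \<Rightarrow> pt \<Rightarrow> real" where
  "gH h Lg g u x = max (g (D0 h u x (1, 0), D0 h u x (0, 1)) + h * Lg * LapH h u x) 0"

definition fH :: "real \<Rightarrow> real \<Rightarrow> (pt \<Rightarrow> real) \<Rightarrow> pt \<Rightarrow> real" where
  "fH h Lf f x = max (f x - h * Lf / sqrt 2) 0"

definition F1 :: "real \<Rightarrow> pt set \<Rightarrow> nat \<Rightarrow> real \<Rightarrow> real \<Rightarrow> (pt \<Rightarrow> real) \<Rightarrow> (pt \<Rightarrow> real) \<Rightarrow> (pt \<Rightarrow> real) \<Rightarrow> pt \<Rightarrow> real" where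
  "F1 h G N Lf Lg f g u x = - gH h Lg g u x * detH h G N u x + fH h Lf f x"

definition subgrad :: "pt set \<Rightarrow> (pt \<Rightarrow> real) \<Rightarrow> pt \<Rightarrow> pt set" where
  "subgrad S u x = {p. \<forall>z \<in> S. u z \<ge> u x + p \<bullet> (z - x)}"

definition subgrad_set :: "pt set \<Rightarrow> (pt \<Rightarrow> real) \<Rightarrow> pt set \<Rightarrow> pt set" where
  "subgrad_set S u E = (\<Union>x \<in> E. subgrad S u x)"

definition piecewise_affine_on :: "pt set \<Rightarrow> (pt \<Rightarrow> real) \<Rightarrow> bool" where
  "piecewise_affine_on S u \<longleftrightarrow>
     (\<exists>P. finite P \<and> S \<subseteq> \<Union>P \<and>
        (\<forall>C \<in> P. polyhedron C \<and> (\<exists>p c. \<forall>z \<in> C \<inter> S. u z = p \<bullet> z + c)))"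

definition cellR :: "real \<Rightarrow> pt \<Rightarrow> pt set" where
  "cellR h x = {fst x - h/2 .. fst x + h/2} \<times> {snd x - h/2 .. snd x + h/2}"

end

theory Submission
  imports Defs
begin

text \<open>
  Up to a null set, the subgradient image of the cell \<open>R\<^sup>h\<^sub>x\<close> is the subdifferential \<open>\<partial>u(x)\<close> at
  the only grid node \<open>x\<close> in it, and \<open>\<partial>u(x)\<close> lies in the polytope of slopes \<open>p\<close> with
  \<open>u(x) - u(x - he) \<le> p\<cdot>he \<le> u(x + he) - u(x)\<close> for the directions of a minimising superbase and
  of the axes. After a unimodular change of variables, Fubini shows that a hexagon bounded by strips
  of widths \<open>h\<Delta>\<^sub>e\<^sub>e u\<close> in the three superbase directions has area at most
  \<open>G(h\<Delta>\<^sub>e\<^sub>e u, h\<Delta>\<^sub>e\<^sub>'\<^sub>e\<^sub>' u, h\<Delta>\<^sub>e\<^sub>'\<^sub>'\<^sub>e\<^sub>'\<^sub>' u) = h\<^sup>2 det\<^sup>h(D\<^sup>2u)(x)\<close>. On that polytope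
  \<open>|p - \<D>\<^sup>0u(x)| \<le> h \<Delta>\<^sup>hu(x)\<close>, so \<open>g \<le> g\<^sup>h(\<nabla>u)(x)\<close> by the Lipschitz bound, while \<open>f \<ge> f\<^sup>h(x)\<close>
  on \<open>R\<^sup>h\<^sub>x\<close>, whose points lie within \<open>h/\<surd>2\<close> of \<open>x\<close>.
\<close>

lemma integrable_on_compact_continuous:
  fixes g :: "'a::euclidean_space \<Rightarrow> real"
  assumes "continuous_on UNIV g" "compact P"
  shows "g integrable_on P"
proof -
  obtain a where sub: "P \<subseteq> cbox (- a) a"
    using bounded_subset_cbox_symmetric compact_imp_bounded[OF assms(2)] by blast
  have "g absolutely_integrable_on cbox (- a) a"
    by (rule absolutely_integrable_continuous) (rule continuous_on_subset[OF assms(1)], simp)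
  moreover have "P \<in> sets lebesgue"
    using lmeasurable_compact[OF assms(2)] by (rule fmeasurableD)
  ultimately have "g absolutely_integrable_on P"
    using sub by (rule set_integrable_subset)
  then show ?thesis by (rule set_lebesgue_integral_eq_integral(1))
qed

lemma integral_le_bound_mul_measure:
  fixes g :: "'a::euclidean_space \<Rightarrow> real"
  assumes "S \<subseteq> P \<union> N" "negligible N" "compact P" "continuous_on UNIV g"
    and "\<And>y. 0 \<le> g y" "\<And>p. p \<in> P \<Longrightarrow> g p \<le> c"
  shows "integral S g \<le> c * measure lebesgue P"
proof (cases "g integrable_on S")
  case True
  have P: "P \<in> lmeasurable" "g integrable_on P"
    using assms(3,4) by (simp_all add: lmeasurable_compact integrable_on_compact_continuous)
  have neg: "negligible {y \<in> S - (S - N). g y \<noteq> 0}" "negligible {y \<in> (S - N) - S. g y \<noteq> 0}"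
    by (auto intro: negligible_subset[OF assms(2)])
  have "integral S g = integral (S - N) g"
    by (rule integral_spike_set[OF neg])
  also have "\<dots> \<le> integral P g"
    using assms(1,5) integrable_spike_set[OF True neg] P(2) by (intro integral_subset_le) auto
  also have "\<dots> \<le> integral P (\<lambda>_. c)"
    using P assms(6) by (intro integral_le integrable_on_const) auto
  also have "\<dots> = c * measure lebesgue P"
    using P(1) by (simp add: lmeasure_integral flip: integral_mult_right)
  finally show ?thesis .
next
  case False
  have "0 \<le> c * measure lebesgue P"
  proof (cases "P = {}")
    case False
    then obtain p where "p \<in> P" by blast
    then have "0 \<le> c" using assms(5,6) order_trans by blast
    then show ?thesis by simp
  qed simp
  then show ?thesis using False by (simp add: not_integrable_integral)
qed

section \<open>Unimodular maps preserve Lebesgue measure\<close>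

definition mat2_map :: "real \<Rightarrow> real \<Rightarrow> real \<Rightarrow> real \<Rightarrow> real \<times> real \<Rightarrow> real \<times> real" where
  "mat2_map a b c d = (\<lambda>(x, y). (a * x + b * y, c * x + d * y))"

lemma mat2_map_comp:
  "mat2_map a b c d \<circ> mat2_map a' b' c' d' = mat2_map (a*a' + b*c') (a*b' + b*d') (c*a' + d*c') (c*b' + d*d')"
  by (auto simp: mat2_map_def algebra_simps)

lemma continuous_on_mat2_map: "continuous_on S (mat2_map a b c d)"
  unfolding mat2_map_def by (simp add: case_prod_beta' continuous_intros)

lemma emeasure_lborel_translate:
  fixes c :: "'a::euclidean_space"
  assumes "B \<in> sets borel"
  shows "emeasure lborel ((+) c -` B) = emeasure lborel B"
  using emeasure_distr[of "(+) c" lborel borel B] assms by (simp add: lborel_distr_plus)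

lemma emeasure_lborel_pair_slices:
  assumes "A \<in> sets (borel :: (real \<times> real) measure)"
  shows "emeasure lborel A = (\<integral>\<^sup>+x. emeasure lborel (Pair x -` A) \<partial>lborel)"
proof -
  have "A \<in> sets (lborel \<Otimes>\<^sub>M lborel)" using assms by (simp only: lborel_prod sets_lborel)
  then show ?thesis by (metis lborel.emeasure_pair_measure_alt lborel_prod)
qed

lemma lborel_distr_shear: "distr lborel lborel (mat2_map 1 0 k 1) = lborel"
proof (rule measure_eqI)
  fix A :: "(real \<times> real) set" assume "A \<in> sets (distr lborel lborel (mat2_map 1 0 k 1))"
  then have A: "A \<in> sets borel" by simp
  have meas: "mat2_map 1 0 k 1 \<in> borel_measurable borel"
    by (intro borel_measurable_continuous_onI continuous_on_mat2_map)
  have A_slice: "Pair x -` A \<in> sets borel" for x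
    using measurable_sets_borel[OF _ A, of "Pair x"] by simp
  have slice: "Pair x -` (mat2_map 1 0 k 1 -` A) = (+) (k * x) -` (Pair x -` A)" for x
    by (auto simp: mat2_map_def add.commute)
  have "emeasure (distr lborel lborel (mat2_map 1 0 k 1)) A = emeasure lborel (mat2_map 1 0 k 1 -` A)"
    using meas A by (simp add: emeasure_distr)
  also have "\<dots> = (\<integral>\<^sup>+x. emeasure lborel (Pair x -` A) \<partial>lborel)"
    using measurable_sets_borel[OF meas A]
    by (simp add: emeasure_lborel_pair_slices slice emeasure_lborel_translate A_slice)
  also have "\<dots> = emeasure lborel A"
    using A by (simp add: emeasure_lborel_pair_slices)
  finally show "emeasure (distr lborel lborel (mat2_map 1 0 k 1)) A = emeasure lborel A" .
qed simp

lemma lborel_distr_swap: "distr lborel lborel (mat2_map 0 1 1 0) = lborel"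
proof -
  have "mat2_map 0 1 1 0 = (\<lambda>(x, y). (y, x))" by (auto simp: mat2_map_def)
  then show ?thesis using lborel_pair.distr_pair_swap[symmetric] by (simp add: lborel_prod)
qed

lemma distr_lborel_mat2_map_mult:
  assumes "distr lborel lborel (mat2_map a b c d) = lborel"
    and "distr lborel lborel (mat2_map a' b' c' d') = lborel"
  shows "distr lborel lborel (mat2_map (a*a' + b*c') (a*b' + b*d') (c*a' + d*c') (c*b' + d*d')) = lborel"
  using distr_distr[of "mat2_map a b c d" lborel lborel "mat2_map a' b' c' d'" lborel] assms
  by (simp add: borel_measurable_continuous_onI continuous_on_mat2_map mat2_map_comp)

lemma lborel_distr_shear': "distr lborel lborel (mat2_map 1 k 0 1) = lborel"
  using distr_lborel_mat2_map_mult[OF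
      distr_lborel_mat2_map_mult[OF lborel_distr_swap lborel_distr_shear] lborel_distr_swap]
  by simp

text \<open>Every matrix of determinant 1 is a product of shears.\<close>
lemma lborel_distr_unimodular:
  assumes "a * d - b * c = 1"
  shows "distr lborel lborel (mat2_map a b c d) = lborel"
proof -
  have shears: "distr lborel lborel (mat2_map a b c d) = lborel" if "a * d - b * c = 1" "c \<noteq> 0" for a b c d
  proof -
    have "1 + (a - 1) / c * c = a" "c * ((d - 1) / c) + 1 = d" "(1 + (a - 1) / c * c) * ((d - 1) / c) + (a - 1) / c = b"
      using that by (simp_all add: field_simps)
    then show ?thesis
      using distr_lborel_mat2_map_mult[OF distr_lborel_mat2_map_mult[OF
            lborel_distr_shear'[of "(a - 1) / c"] lborel_distr_shear[of c]] lborel_distr_shear'[of "(d - 1) / c"]]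
      by simp
  qed
  show ?thesis
  proof (cases "c = 0")
    case True
    have "distr lborel lborel (mat2_map (a - b) b (- d) d) = lborel"
      using True assms by (intro shears) (auto simp: algebra_simps)
    then show ?thesis
      using distr_lborel_mat2_map_mult[OF _ lborel_distr_shear[of 1], of "a - b" b "- d" d] True by simp
  qed (use shears assms in blast)
qed

section \<open>The area of a hexagon with sides in the directions of a superbase\<close>

lemma Gfun_commute: "0 \<le> a \<Longrightarrow> Gfun a b c = Gfun a c b"
  by (auto simp: Gfun_def algebra_simps)

lemma Gfun_nonneg:
  assumes "0 \<le> a" "0 \<le> b" "0 \<le> c"
  shows "0 \<le> Gfun a b c"
proof (cases "a \<ge> b + c \<or> b \<ge> c + a \<or> c \<ge> a + b")
  case False
  then have "0 < b + c - a" "0 < c + a - b" "0 < a + b - c" by auto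
  then have "0 \<le> (b + c - a) * (c + a - b) + (c + a - b) * (a + b - c) + (a + b - c) * (b + c - a)"
    by (simp add: add_nonneg_nonneg)
  moreover have "4 * Gfun a b c = (b + c - a) * (c + a - b) + (c + a - b) * (a + b - c) + (a + b - c) * (b + c - a)"
    using False by (simp add: Gfun_def power2_eq_square field_simps)
  ultimately show ?thesis by linarith
qed (use assms in \<open>auto simp: Gfun_def\<close>)

lemma Gfun_mult:
  assumes "0 < h"
  shows "Gfun (h * a) (h * b) (h * c) = h^2 * Gfun a b c"
proof -
  have "(h * a \<ge> h * b + h * c) = (a \<ge> b + c)" "(h * b \<ge> h * c + h * a) = (b \<ge> c + a)"
       "(h * c \<ge> h * a + h * b) = (c \<ge> a + b)"
    using assms by (simp_all flip: distrib_left)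
  then show ?thesis unfolding Gfun_def by (simp add: power2_eq_square field_simps)
qed

definition ramp_primitive :: "real \<Rightarrow> real" where
  "ramp_primitive z = (max 0 z)^2 / 2"

lemma ramp_has_integral:
  assumes "a \<le> b"
  shows "((\<lambda>s. max 0 (s - p)) has_integral ramp_primitive (b - p) - ramp_primitive (a - p)) {a..b}"
proof (rule fundamental_theorem_of_calculus_interior_strong[where S = "{p}"])
  show "continuous_on {a..b} (\<lambda>s. ramp_primitive (s - p))"
    unfolding ramp_primitive_def by (auto intro!: continuous_intros)
  show "((\<lambda>s. ramp_primitive (s - p)) has_vector_derivative max 0 (s - p)) (at s)"
    if "s \<in> {a<..<b} - {p}" for s
  proof (cases "s < p")
    case True
    have "((\<lambda>s. 0) has_real_derivative 0) (at s)" by simp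
    then have "((\<lambda>s. ramp_primitive (s - p)) has_real_derivative 0) (at s)"
      by (rule has_field_derivative_transform_within_open[OF _ open_lessThan, of _ _ s p])
         (use True in \<open>auto simp: ramp_primitive_def\<close>)
    then show ?thesis using True by (simp add: has_real_derivative_iff_has_vector_derivative)
  next
    case False
    with that have "p < s" by auto
    have "((\<lambda>s. (s - p)^2 / 2) has_real_derivative s - p) (at s)"
      by (auto intro!: derivative_eq_intros)
    then have "((\<lambda>s. ramp_primitive (s - p)) has_real_derivative s - p) (at s)"
      by (rule has_field_derivative_transform_within_open[OF _ open_greaterThan, of _ _ s p])
         (use \<open>p < s\<close> in \<open>auto simp: ramp_primitive_def\<close>)
    then show ?thesis using \<open>p < s\<close> by (simp add: has_real_derivative_iff_has_vector_derivative)
  qed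
qed (use assms in auto)

text \<open>For \<open>B = u\<^sub>2 - l\<^sub>2\<close>, \<open>C = u\<^sub>3 - l\<^sub>3\<close>, \<open>p = l\<^sub>3 - u\<^sub>2\<close>, \<open>trapezoid B C p s\<close> is the length of
  \<open>{t. l\<^sub>2 \<le> t \<le> u\<^sub>2 \<and> l\<^sub>3 \<le> s + t \<le> u\<^sub>3}\<close>.\<close>
definition trapezoid :: "real \<Rightarrow> real \<Rightarrow> real \<Rightarrow> real \<Rightarrow> real" where
  "trapezoid B C p s = max 0 (min (min B C) (min (s - p) (p + B + C - s)))"

lemma continuous_on_trapezoid: "continuous_on S (trapezoid B C p)"
  unfolding trapezoid_def by (intro continuous_intros)

lemma trapezoid_nonneg: "0 \<le> trapezoid B C p s"
  by (simp add: trapezoid_def)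

lemma trapezoid_commute: "trapezoid B C = trapezoid C B"
  by (auto simp: trapezoid_def fun_eq_iff min.commute add_ac)

lemma trapezoid_abs: "trapezoid B C p s = max 0 (min (min B C) ((B + C) / 2 - \<bar>s - (p + (B + C) / 2)\<bar>))"
  unfolding trapezoid_def by (auto simp: abs_if min_def max_def field_simps)

lemma trapezoid_centered_has_integral:
  assumes "0 \<le> A" "0 \<le> B" "B \<le> C"
  shows "(trapezoid B C p has_integral Gfun A B C) {p + (B + C) / 2 - A / 2 .. p + (B + C) / 2 + A / 2}"
proof -
  define a b where "a = p + (B + C) / 2 - A / 2" and "b = p + (B + C) / 2 + A / 2"
  define I where "I = (ramp_primitive (b - p) - ramp_primitive (a - p))
      - (ramp_primitive (b - (p + B)) - ramp_primitive (a - (p + B)))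
      - (ramp_primitive (b - (p + C)) - ramp_primitive (a - (p + C)))
      + (ramp_primitive (b - (p + B + C)) - ramp_primitive (a - (p + B + C)))"
  have ramps: "trapezoid B C p
      = (\<lambda>s. max 0 (s - p) - max 0 (s - (p + B)) - max 0 (s - (p + C)) + max 0 (s - (p + B + C)))"
    using assms by (auto simp: trapezoid_def fun_eq_iff min_def max_def)
  have "(trapezoid B C p has_integral I) {a..b}"
    unfolding ramps I_def using assms
    by (intro has_integral_add has_integral_diff ramp_has_integral) (simp_all add: a_def b_def)
  moreover have "I = Gfun A B C"
  proof -
    consider "A \<le> C - B" | "C - B < A" "A < B + C" | "A = B + C" | "B + C < A" by linarith
    then show ?thesis
      by cases (use assms in \<open>auto simp: I_def a_def b_def ramp_primitive_def Gfun_def max_def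
          power2_eq_square field_simps\<close>)
  qed
  ultimately show ?thesis by (simp add: a_def b_def)
qed

lemma integral_interval_le_superlevel_interval:
  fixes \<phi> :: "real \<Rightarrow> real"
  assumes cont: "continuous_on UNIV \<phi>" and "0 \<le> A"
    and above: "\<And>s. s \<in> {c .. c + A} \<Longrightarrow> k \<le> \<phi> s"
    and below: "\<And>s. s \<notin> {c .. c + A} \<Longrightarrow> \<phi> s \<le> k"
  shows "integral {x .. x + A} \<phi> \<le> integral {c .. c + A} \<phi>"
proof -
  let ?I = "{x .. x + A}" and ?J = "{c .. c + A}"
  have int: "(\<phi> has_integral integral ?I \<phi>) ?I" "(\<phi> has_integral integral ?J \<phi>) ?J"
    by (simp_all add: integrable_integral integrable_continuous_interval continuous_on_subset[OF cont])
  have const: "((\<lambda>s. k) has_integral A * k) ?I" "((\<lambda>s. k) has_integral A * k) ?J"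
    using \<open>0 \<le> A\<close> has_integral_const_real[of k x "x + A"] has_integral_const_real[of k c "c + A"] by simp_all
  define lhs where "lhs s = (if s \<in> ?I then \<phi> s else 0)" for s
  define rhs where "rhs s = (if s \<in> ?J then \<phi> s else 0) + (if s \<in> ?I then k else 0) - (if s \<in> ?J then k else 0)" for s
  have "(lhs has_integral integral ?I \<phi>) UNIV"
    using int unfolding lhs_def has_integral_restrict_UNIV by blast
  moreover have "(rhs has_integral integral ?J \<phi> + A * k - A * k) UNIV"
    unfolding rhs_def
    by (intro has_integral_add has_integral_diff) (simp_all only: has_integral_restrict_UNIV int const)
  moreover have "lhs s \<le> rhs s" for s
    using above[of s] below[of s] by (auto simp: lhs_def rhs_def)
  ultimately have "integral ?I \<phi> \<le> integral ?J \<phi> + A * k - A * k"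
    by (rule has_integral_le)
  then show ?thesis by simp
qed

lemma integral_trapezoid_le_Gfun:
  assumes "0 \<le> A" "0 \<le> B" "0 \<le> C"
  shows "integral {x .. x + A} (trapezoid B C p) \<le> Gfun A B C"
proof -
  have *: "integral {x .. x + A} (trapezoid B C p) \<le> Gfun A B C" if "0 \<le> B" "B \<le> C" for B C
  proof -
    define m where "m = p + (B + C) / 2"
    define c where "c = m - A / 2"
    define T where "T d = max 0 (min (min B C) ((B + C) / 2 - d))" for d
    have T_antimono: "T d' \<le> T d" if "d \<le> d'" for d d'
      unfolding T_def by (intro max.mono min.mono order_refl) (use that in simp)
    have T: "trapezoid B C p s = T \<bar>s - m\<bar>" for s
      by (simp add: trapezoid_abs T_def m_def)
    have in_iff: "s \<in> {c .. c + A} \<longleftrightarrow> \<bar>s - m\<bar> \<le> A / 2" for s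
      by (auto simp: c_def abs_if)
    have "integral {x .. x + A} (trapezoid B C p) \<le> integral {c .. c + A} (trapezoid B C p)"
    proof (rule integral_interval_le_superlevel_interval[OF continuous_on_trapezoid \<open>0 \<le> A\<close>])
      show "T (A / 2) \<le> trapezoid B C p s" if "s \<in> {c .. c + A}" for s
        using that unfolding in_iff T by (rule T_antimono)
      show "trapezoid B C p s \<le> T (A / 2)" if "s \<notin> {c .. c + A}" for s
        using that unfolding in_iff T by (intro T_antimono) simp
    qed
    also have "\<dots> = Gfun A B C"
    proof -
      have "{c .. c + A} = {p + (B + C) / 2 - A / 2 .. p + (B + C) / 2 + A / 2}"
        by (simp add: c_def m_def)
      then show ?thesis
        using integral_unique[OF trapezoid_centered_has_integral[OF \<open>0 \<le> A\<close> that]] by presburger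
    qed
    finally show ?thesis .
  qed
  show ?thesis
  proof (cases "B \<le> C")
    case False
    then show ?thesis using *[of C B] assms by (simp add: trapezoid_commute Gfun_commute)
  qed (use * assms in blast)
qed

lemma emeasure_strip_region_le:
  assumes "l1 \<le> u1" "l2 \<le> u2" "l3 \<le> u3"
  shows "emeasure lborel {z :: real \<times> real. l1 \<le> fst z \<and> fst z \<le> u1 \<and> l2 \<le> snd z \<and> snd z \<le> u2
                                         \<and> l3 \<le> fst z + snd z \<and> fst z + snd z \<le> u3}
           \<le> ennreal (Gfun (u1 - l1) (u2 - l2) (u3 - l3))" (is "emeasure lborel ?R \<le> _")
proof -
  let ?T = "trapezoid (u2 - l2) (u3 - l3) (l3 - u2)"
  have "closed ?R" by (intro closed_Collect_conj closed_Collect_le continuous_intros)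
  then have "emeasure lborel ?R = (\<integral>\<^sup>+s. emeasure lborel (Pair s -` ?R) \<partial>lborel)"
    by (intro emeasure_lborel_pair_slices) simp
  also have "\<dots> = (\<integral>\<^sup>+s. ennreal (?T s) * indicator {l1..u1} s \<partial>lborel)"
  proof (rule nn_integral_cong)
    fix s
    have "Pair s -` ?R = (if s \<in> {l1..u1} then {max l2 (l3 - s) .. min u2 (u3 - s)} else {})"
      by auto
    moreover have "?T s = max 0 (min u2 (u3 - s) - max l2 (l3 - s))"
      by (simp add: trapezoid_def min_def max_def)
    ultimately show "emeasure lborel (Pair s -` ?R) = ennreal (?T s) * indicator {l1..u1} s"
      by (simp add: max_def)
  qed
  also have "\<dots> = ennreal (integral {l1..u1} ?T)"
    by (intro nn_integral_has_integral_lebesgue' integrable_integral integrable_continuous_interval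
        continuous_on_trapezoid trapezoid_nonneg)
  also have "\<dots> \<le> ennreal (Gfun (u1 - l1) (u2 - l2) (u3 - l3))"
    using integral_trapezoid_le_Gfun[of "u1 - l1" "u2 - l2" "u3 - l3" l1] assms
    by (intro ennreal_leI) simp
  finally show ?thesis .
qed

text \<open>The unimodular map \<open>p \<mapsto> (a \<bullet> p, b \<bullet> p)\<close> carries the hexagon onto the region of
  \<open>emeasure_strip_region_le\<close>.\<close>
lemma emeasure_hexagon_le:
  fixes a b :: "real \<times> real"
  assumes det: "fst a * snd b - snd a * fst b = 1" and "l1 \<le> u1" "l2 \<le> u2" "l3 \<le> u3"
  shows "emeasure lborel {p. l1 \<le> a \<bullet> p \<and> a \<bullet> p \<le> u1 \<and> l2 \<le> b \<bullet> p \<and> b \<bullet> p \<le> u2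
                             \<and> l3 \<le> (a + b) \<bullet> p \<and> (a + b) \<bullet> p \<le> u3}
           \<le> ennreal (Gfun (u1 - l1) (u2 - l2) (u3 - l3))"
proof -
  define R where "R = {z :: real \<times> real. l1 \<le> fst z \<and> fst z \<le> u1 \<and> l2 \<le> snd z \<and> snd z \<le> u2
                                        \<and> l3 \<le> fst z + snd z \<and> fst z + snd z \<le> u3}"
  have "closed R" unfolding R_def by (intro closed_Collect_conj closed_Collect_le continuous_intros)
  have "{p. l1 \<le> a \<bullet> p \<and> a \<bullet> p \<le> u1 \<and> l2 \<le> b \<bullet> p \<and> b \<bullet> p \<le> u2
           \<and> l3 \<le> (a + b) \<bullet> p \<and> (a + b) \<bullet> p \<le> u3} = mat2_map (fst a) (snd a) (fst b) (snd b) -` R"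
    by (auto simp: R_def mat2_map_def inner_prod_def algebra_simps)
  also have "emeasure lborel \<dots> = emeasure (distr lborel lborel (mat2_map (fst a) (snd a) (fst b) (snd b))) R"
    using \<open>closed R\<close> by (simp add: emeasure_distr borel_measurable_continuous_onI continuous_on_mat2_map)
  also have "\<dots> = emeasure lborel R"
    using det by (simp add: lborel_distr_unimodular)
  also have "\<dots> \<le> ennreal (Gfun (u1 - l1) (u2 - l2) (u3 - l3))"
    unfolding R_def using assms by (intro emeasure_strip_region_le)
  finally show ?thesis .
qed

lemma superbase_hvec:
  assumes "superbase e e' e''"
  obtains a b :: pt where "fst a * snd b - snd a * fst b = 1"
    and "hvec h e = h *\<^sub>R a" "hvec h e' = h *\<^sub>R b" "hvec h e'' = - (h *\<^sub>R (a + b))"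
proof -
  define a b :: pt where "a = (of_int (fst e), of_int (snd e))" and "b = (of_int (fst e'), of_int (snd e'))"
  have "fst a * snd b - snd a * fst b = 1"
    using assms by (simp add: a_def b_def superbase_def flip: of_int_mult of_int_diff)
  moreover have "e'' = (- (fst e + fst e'), - (snd e + snd e'))"
    using assms by (simp add: superbase_def prod_eq_iff)
  ultimately show ?thesis
    using that[of a b] by (simp add: hvec_def a_def b_def algebra_simps)
qed

section \<open>Slopes compatible with the finite differences\<close>

definition stencil_polytope :: "real \<Rightarrow> (pt \<Rightarrow> real) \<Rightarrow> pt \<Rightarrow> (int \<times> int) set \<Rightarrow> pt set" where
  "stencil_polytope h u x V =
     {p. \<forall>v \<in> V. u x - u (x - hvec h v) \<le> p \<bullet> hvec h v \<and> p \<bullet> hvec h v \<le> u (x + hvec h v) - u x}"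

lemma subgrad_subset_stencil_polytope:
  assumes "\<And>v. v \<in> V \<Longrightarrow> x + hvec h v \<in> S \<and> x - hvec h v \<in> S"
  shows "subgrad S u x \<subseteq> stencil_polytope h u x V"
proof
  fix p assume p: "p \<in> subgrad S u x"
  have "u x - u (x - hvec h v) \<le> p \<bullet> hvec h v \<and> p \<bullet> hvec h v \<le> u (x + hvec h v) - u x" if "v \<in> V" for v
  proof -
    have "u x + p \<bullet> (x + hvec h v - x) \<le> u (x + hvec h v)" "u x + p \<bullet> (x - hvec h v - x) \<le> u (x - hvec h v)"
      using p assms[OF that] unfolding subgrad_def by blast+
    then show ?thesis by (simp add: inner_minus_right)
  qed
  then show "p \<in> stencil_polytope h u x V" by (simp add: stencil_polytope_def)
qed

lemma subgrad_set_subset_isolated: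
  assumes "E \<subseteq> X" "E \<inter> G \<subseteq> {x}"
  shows "subgrad_set S u E \<subseteq> subgrad S u x \<union> subgrad_set S u (X - G)"
  using assms unfolding subgrad_set_def by blast

lemma closed_stencil_polytope: "closed (stencil_polytope h u x V)"
proof -
  have "stencil_polytope h u x V = (\<Inter>v \<in> V. {p. u x - u (x - hvec h v) \<le> p \<bullet> hvec h v}
                                              \<inter> {p. p \<bullet> hvec h v \<le> u (x + hvec h v) - u x})"
    by (auto simp: stencil_polytope_def)
  also have "closed \<dots>"
    by (intro closed_INT ballI closed_Int closed_Collect_le continuous_intros)
  finally show ?thesis .
qed

lemma Dee_nonneg_of_stencil_polytope:
  assumes "p \<in> stencil_polytope h u x V" "v \<in> V"
  shows "0 \<le> Dee h u x v"
  using assms by (force simp: stencil_polytope_def Dee_def)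

text \<open>The slope of \<open>p\<close> in direction \<open>v\<close> lies in the interval bounded by the one-sided differences,
  whose midpoint is the centred difference and whose half-length is \<open>h \<Delta>\<^sub>v\<^sub>v u / 2\<close>.\<close>
lemma centred_difference_close:
  assumes "0 < h" "p \<in> stencil_polytope h u x V" "v \<in> V"
  shows "\<bar>p \<bullet> hvec h v / h - D0 h u x v\<bar> \<le> h * Dee h u x v / 2"
proof -
  let ?d = "2 * (p \<bullet> hvec h v) - (u (x + hvec h v) - u (x - hvec h v))"
  have "p \<bullet> hvec h v / h - D0 h u x v = ?d / (2 * h)"
    using assms(1) by (simp add: D0_def field_simps)
  then have "\<bar>p \<bullet> hvec h v / h - D0 h u x v\<bar> = \<bar>?d\<bar> / (2 * h)"
    using assms(1) by (simp add: abs_divide)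
  also have "\<dots> \<le> (u (x + hvec h v) + u (x - hvec h v) - 2 * u x) / (2 * h)"
    using assms by (intro divide_right_mono) (auto simp: stencil_polytope_def abs_le_iff)
  also have "\<dots> = h * Dee h u x v / 2"
    using assms(1) by (simp add: Dee_def power2_eq_square field_simps)
  finally show ?thesis .
qed

lemma stencil_polytope_axes:
  assumes "0 < h" "p \<in> stencil_polytope h u x V" "(1, 0) \<in> V" "(0, 1) \<in> V"
  shows "\<bar>fst p - D0 h u x (1, 0)\<bar> \<le> h * Dee h u x (1, 0) / 2"
    and "\<bar>snd p - D0 h u x (0, 1)\<bar> \<le> h * Dee h u x (0, 1) / 2"
  using centred_difference_close[OF assms(1,2,3)] centred_difference_close[OF assms(1,2,4)] assms(1)
  by (simp_all add: hvec_def inner_prod_def)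

lemma bounded_stencil_polytope:
  assumes "0 < h" "(1, 0) \<in> V" "(0, 1) \<in> V"
  shows "bounded (stencil_polytope h u x V)"
proof -
  let ?c = "(D0 h u x (1, 0), D0 h u x (0, 1))" and ?r = "h * Dee h u x (1, 0) / 2 + h * Dee h u x (0, 1) / 2"
  have "dist ?c p \<le> ?r" if "p \<in> stencil_polytope h u x V" for p
  proof -
    have "dist ?c p \<le> \<bar>fst p - D0 h u x (1, 0)\<bar> + \<bar>snd p - D0 h u x (0, 1)\<bar>"
      by (simp add: dist_prod_def dist_real_def sqrt_sum_squares_le_sum_abs abs_minus_commute)
    then show ?thesis using stencil_polytope_axes[OF assms(1) that assms(2,3)] by linarith
  qed
  then show ?thesis unfolding bounded_def by blast
qed

lemma g_le_gH_on_stencil_polytope: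
  assumes "0 < h" "Lg-lipschitz_on UNIV g" "p \<in> stencil_polytope h u x V" "(1, 0) \<in> V" "(0, 1) \<in> V"
  shows "g p \<le> gH h Lg g u x"
proof -
  define D where "D = (D0 h u x (1, 0), D0 h u x (0, 1))"
  have "dist p D \<le> \<bar>fst p - fst D\<bar> + \<bar>snd p - snd D\<bar>"
    by (simp add: dist_prod_def dist_real_def sqrt_sum_squares_le_sum_abs)
  also have "\<dots> \<le> h * LapH h u x"
  proof -
    have "0 \<le> h * Dee h u x (1, 0)" "0 \<le> h * Dee h u x (0, 1)"
      using assms(1) Dee_nonneg_of_stencil_polytope[OF assms(3,4)] Dee_nonneg_of_stencil_polytope[OF assms(3,5)]
      by simp_all
    then show ?thesis
      using stencil_polytope_axes[OF assms(1,3-5)] by (simp add: D_def LapH_def distrib_left)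
  qed
  finally have "dist p D \<le> h * LapH h u x" .
  then have "Lg * dist p D \<le> Lg * (h * LapH h u x)"
    using lipschitz_on_nonneg[OF assms(2)] by (rule mult_left_mono)
  moreover have "g p - g D \<le> Lg * dist p D"
    using lipschitz_onD[OF assms(2), of p D] by (simp add: dist_real_def)
  ultimately show ?thesis by (simp add: gH_def D_def algebra_simps)
qed

lemma measure_stencil_polytope_le:
  assumes h: "0 < h" and sb: "superbase e e' e''" and V: "e \<in> V" "e' \<in> V" "e'' \<in> V"
  shows "measure lebesgue (stencil_polytope h u x V)
           \<le> h^2 * Gfun (max (Dee h u x e) 0) (max (Dee h u x e') 0) (max (Dee h u x e'') 0)"
proof (cases "stencil_polytope h u x V = {}")
  case True
  then show ?thesis by (simp add: Gfun_nonneg)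
next
  case False
  then obtain p0 where p0: "p0 \<in> stencil_polytope h u x V" by blast
  let ?P = "stencil_polytope h u x V"
  define lo hi where "lo v = (u x - u (x - hvec h v)) / h" and "hi v = (u (x + hvec h v) - u x) / h" for v
  obtain a b where det: "fst a * snd b - snd a * fst b = 1"
    and hv: "hvec h e = h *\<^sub>R a" "hvec h e' = h *\<^sub>R b" "hvec h e'' = - (h *\<^sub>R (a + b))"
    using superbase_hvec[OF sb] .
  have width: "hi v - lo v = h * Dee h u x v" for v
    using h by (simp add: lo_def hi_def Dee_def power2_eq_square field_simps)
  have Dee_nonneg: "0 \<le> Dee h u x v" if "v \<in> V" for v
    using Dee_nonneg_of_stencil_polytope[OF p0 that] .
  have lo_le_hi: "lo v \<le> hi v" if "v \<in> V" for v
    using width[of v] mult_nonneg_nonneg[OF less_imp_le[OF h] Dee_nonneg[OF that]] by linarith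
  have slope: "lo v \<le> p \<bullet> hvec h v / h \<and> p \<bullet> hvec h v / h \<le> hi v" if "p \<in> ?P" "v \<in> V" for p v
    using that h by (simp add: stencil_polytope_def lo_def hi_def divide_right_mono)
  have dirs: "p \<bullet> hvec h e / h = a \<bullet> p" "p \<bullet> hvec h e' / h = b \<bullet> p" "p \<bullet> hvec h e'' / h = - ((a + b) \<bullet> p)" for p
    using h by (simp_all add: hv inner_commute)
  have "?P \<subseteq> {p. lo e \<le> a \<bullet> p \<and> a \<bullet> p \<le> hi e \<and> lo e' \<le> b \<bullet> p \<and> b \<bullet> p \<le> hi e'
                  \<and> - hi e'' \<le> (a + b) \<bullet> p \<and> (a + b) \<bullet> p \<le> - lo e''}" (is "_ \<subseteq> ?H")
    using slope V by (fastforce simp: dirs)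
  then have "emeasure lborel ?P \<le> emeasure lborel ?H"
    by (intro emeasure_mono) (auto intro!: borel_closed closed_Collect_conj closed_Collect_le continuous_intros)
  also have "\<dots> \<le> ennreal (Gfun (hi e - lo e) (hi e' - lo e') (- lo e'' - - hi e''))"
    using lo_le_hi V by (intro emeasure_hexagon_le det) auto
  also have "Gfun (hi e - lo e) (hi e' - lo e') (- lo e'' - - hi e'')
      = h^2 * Gfun (max (Dee h u x e) 0) (max (Dee h u x e') 0) (max (Dee h u x e'') 0)"
    using width Dee_nonneg V h by (simp add: Gfun_mult)
  finally have "emeasure lborel ?P \<le> ennreal (h^2 * Gfun (max (Dee h u x e) 0) (max (Dee h u x e') 0) (max (Dee h u x e'') 0))" .
  moreover have "?P \<in> sets borel" by (simp add: closed_stencil_polytope borel_closed)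
  ultimately show ?thesis
    by (simp add: measure_def enn2real_leI Gfun_nonneg)
qed

lemma integral_le_gH_mul_Gfun:
  assumes h: "0 < h" and g: "Lg-lipschitz_on UNIV g" "\<And>y. 0 \<le> g y"
    and S: "S \<subseteq> stencil_polytope h u x V \<union> N" "negligible N"
    and sb: "superbase e e' e''" and V: "{e, e', e'', (1, 0), (0, 1)} \<subseteq> V"
  shows "integral S g
           \<le> h^2 * (gH h Lg g u x * Gfun (max (Dee h u x e) 0) (max (Dee h u x e') 0) (max (Dee h u x e'') 0))"
proof -
  have "integral S g \<le> gH h Lg g u x * measure lebesgue (stencil_polytope h u x V)"
  proof (rule integral_le_bound_mul_measure[OF S])
    show "compact (stencil_polytope h u x V)" unfolding compact_eq_bounded_closed
      using V by (intro conjI bounded_stencil_polytope closed_stencil_polytope h) auto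
    show "continuous_on UNIV g" using g(1) by (rule lipschitz_on_continuous_on)
    show "g p \<le> gH h Lg g u x" if "p \<in> stencil_polytope h u x V" for p
      using that V by (intro g_le_gH_on_stencil_polytope[OF h g(1)]) auto
  qed (use g(2) in auto)
  also have "\<dots> \<le> gH h Lg g u x * (h^2 * Gfun (max (Dee h u x e) 0) (max (Dee h u x e') 0) (max (Dee h u x e'') 0))"
    using V by (intro mult_left_mono measure_stencil_polytope_le[OF h sb]) (auto simp: gH_def)
  finally show ?thesis by (simp add: algebra_simps)
qed

section \<open>The grid, its cells and the admissible superbases\<close>

lemma finite_admissible: "finite (admissible h G N x)"
proof -
  define W where "W = {- int N .. int N} \<times> {- int N .. int N}"
  have "v \<in> W" if "real_of_int (supnorm v) < sqrt (real N)" for v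
  proof -
    have "sqrt (real N) \<le> real N"
      by (cases "N = 0") (auto intro: real_sqrt_le_mono[of "real N" "real N ^ 2", simplified] simp: power2_eq_square)
    then have "supnorm v < int N" using that by linarith
    then show ?thesis by (auto simp: W_def supnorm_def mem_Times_iff abs_less_iff)
  qed
  then have "admissible h G N x \<subseteq> W \<times> W \<times> W" by (auto simp: admissible_def)
  then show ?thesis by (rule finite_subset) (simp add: W_def)
qed

lemma detH_attained:
  assumes "admissible h G N x \<noteq> {}"
  obtains e e' e'' where "(e, e', e'') \<in> admissible h G N x"
    and "detH h G N u x = Gfun (max (Dee h u x e) 0) (max (Dee h u x e') 0) (max (Dee h u x e'') 0)"
proof -
  let ?F = "\<lambda>(e, e', e''). Gfun (max (Dee h u x e) 0) (max (Dee h u x e') 0) (max (Dee h u x e'') 0)"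
  have "Min (?F ` admissible h G N x) \<in> ?F ` admissible h G N x"
    using finite_admissible assms by (intro Min_in) auto
  then show ?thesis using that by (auto simp: detH_def)
qed

lemma standard_superbase_admissible:
  assumes "2 \<le> N" and "\<And>v. v \<in> {(1, 0), (0, 1), (-1, -1)} \<Longrightarrow> x + hvec h v \<in> G \<and> x - hvec h v \<in> G"
  shows "((1, 0), (0, 1), (-1, -1)) \<in> admissible h G N x"
proof -
  have "1 < sqrt (real N)" using assms(1) by (simp add: real_less_rsqrt)
  then show ?thesis
    using assms(2) by (simp add: admissible_def superbase_def supnorm_def)
qed

lemma open_sqX: "open (sqX a1 a2 h K)"
  by (simp add: sqX_def open_Times)

lemma frontier_sqX_disjoint: "frontier (sqX a1 a2 h K) \<inter> sqX a1 a2 h K = {}"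
  using open_sqX by (auto simp: frontier_def interior_open)

lemma closure_sqX:
  assumes "0 < h" "1 \<le> K"
  shows "closure (sqX a1 a2 h K) = {a1 .. a1 + real K * h} \<times> {a2 .. a2 + real K * h}"
  using assms by (simp add: sqX_def closure_Times)

lemma interior_gridG_point:
  assumes "0 < h" "B \<subseteq> frontier (sqX a1 a2 h K)" "x \<in> gridG a1 a2 h K B \<inter> sqX a1 a2 h K"
  obtains i j :: nat where "x = (a1 + h * real i, a2 + h * real j)" "1 \<le> i" "i < K" "1 \<le> j" "j < K"
proof -
  have "x \<notin> B" using assms(2,3) frontier_sqX_disjoint by blast
  then obtain i j where x: "x = (a1 + h * real i, a2 + h * real j)"
    using assms(3) by (auto simp: gridG_def)
  then have "0 < h * real i" "h * real i < h * real K" "0 < h * real j" "h * real j < h * real K"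
    using assms(3) by (auto simp: sqX_def mult.commute)
  then have "0 < i" "i < K" "0 < j" "j < K"
    using assms(1) by (simp_all add: zero_less_mult_iff)
  then show ?thesis by (intro that[OF x]) auto
qed

lemma hvec_uminus: "hvec h (- v1, - v2) = - hvec h (v1, v2)"
  by (simp add: hvec_def)

lemma gridG_neighbour:
  assumes x: "x = (a1 + h * real i, a2 + h * real j)" and ij: "1 \<le> i" "i < K" "1 \<le> j" "j < K"
    and v: "\<bar>v1\<bar> \<le> 1" "\<bar>v2\<bar> \<le> 1"
  shows "x + hvec h (v1, v2) \<in> gridG a1 a2 h K B" and "x - hvec h (v1, v2) \<in> gridG a1 a2 h K B"
proof -
  have plus: "x + hvec h (w1, w2) \<in> gridG a1 a2 h K B" if "\<bar>w1\<bar> \<le> 1" "\<bar>w2\<bar> \<le> 1" for w1 w2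
  proof -
    define i' j' where "i' = nat (int i + w1)" and "j' = nat (int j + w2)"
    have "real i' = real i + of_int w1" "real j' = real j + of_int w2" "i' \<le> K" "j' \<le> K"
      using ij that by (auto simp: i'_def j'_def)
    moreover have "x + hvec h (w1, w2) = (a1 + h * real i', a2 + h * real j')"
      using x calculation(1,2) by (simp add: hvec_def algebra_simps)
    ultimately show ?thesis
      unfolding gridG_def by blast
  qed
  show "x + hvec h (v1, v2) \<in> gridG a1 a2 h K B" using plus v .
  show "x - hvec h (v1, v2) \<in> gridG a1 a2 h K B" using plus[of "- v1" "- v2"] v by (simp add: hvec_uminus)
qed

lemma gridG_subset_closure_sqX:
  assumes "0 < h" "1 \<le> K" "B \<subseteq> frontier (sqX a1 a2 h K)"
  shows "gridG a1 a2 h K B \<subseteq> closure (sqX a1 a2 h K)"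
proof -
  have "(a1 + h * real i, a2 + h * real j) \<in> closure (sqX a1 a2 h K)" if "i \<le> K" "j \<le> K" for i j
  proof -
    have "h * real i \<le> real K * h" "h * real j \<le> real K * h"
      using that assms(1) by (simp_all add: mult.commute)
    then show ?thesis using assms(1,2) by (simp add: closure_sqX)
  qed
  moreover have "B \<subseteq> closure (sqX a1 a2 h K)"
    using assms(3) by (auto simp: frontier_def)
  ultimately show ?thesis by (auto simp: gridG_def)
qed

lemma cellR_subset_sqX:
  assumes "0 < h" "x = (a1 + h * real i, a2 + h * real j)" "1 \<le> i" "i < K" "1 \<le> j" "j < K"
  shows "cellR h x \<subseteq> sqX a1 a2 h K"
proof
  fix z assume "z \<in> cellR h x"
  then have "a1 + h * real i - h / 2 \<le> fst z" "fst z \<le> a1 + h * real i + h / 2"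
            "a2 + h * real j - h / 2 \<le> snd z" "snd z \<le> a2 + h * real j + h / 2"
    by (auto simp: cellR_def assms(2) mem_Times_iff)
  moreover have "h * 1 \<le> h * real i" "h * (real i + 1) \<le> h * real K" "h * 1 \<le> h * real j" "h * (real j + 1) \<le> h * real K"
    using assms(1,3-6) by (intro mult_left_mono; simp)+
  ultimately show "z \<in> sqX a1 a2 h K"
    unfolding sqX_def mem_Times_iff greaterThanLessThan_iff using assms(1)
    by (intro conjI; simp only: distrib_left mult.commute[of h]; linarith)
qed

lemma cellR_inter_gridG:
  assumes "0 < h" "B \<subseteq> frontier (sqX a1 a2 h K)"
    and "x = (a1 + h * real i, a2 + h * real j)" "1 \<le> i" "i < K" "1 \<le> j" "j < K"
  shows "cellR h x \<inter> gridG a1 a2 h K B \<subseteq> {x}"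
proof
  fix z assume z: "z \<in> cellR h x \<inter> gridG a1 a2 h K B"
  then have "z \<notin> B"
    using cellR_subset_sqX[OF assms(1,3-7)] assms(2) frontier_sqX_disjoint by blast
  then obtain i' j' where z_eq: "z = (a1 + h * real i', a2 + h * real j')"
    using z by (auto simp: gridG_def)
  have "h * (real i - real i') \<le> h * (1 / 2)" "h * (real i' - real i) \<le> h * (1 / 2)"
       "h * (real j - real j') \<le> h * (1 / 2)" "h * (real j' - real j) \<le> h * (1 / 2)"
    using z by (auto simp: cellR_def z_eq assms(3) algebra_simps)
  then have "\<bar>real i' - real i\<bar> < 1" "\<bar>real j' - real j\<bar> < 1"
    using assms(1) by (simp_all only: mult_le_cancel_left_pos)
  then have "i' = i" "j' = j" by (simp_all add: abs_less_iff)
  then show "z \<in> {x}" by (simp add: z_eq assms(3))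
qed

lemma dist_le_of_mem_cellR:
  assumes "0 \<le> h" "z \<in> cellR h x"
  shows "dist x z \<le> h / sqrt 2"
proof -
  have "fst x - h / 2 \<le> fst z" "fst z \<le> fst x + h / 2" "snd x - h / 2 \<le> snd z" "snd z \<le> snd x + h / 2"
    using assms(2) by (auto simp: cellR_def mem_Times_iff)
  then have "\<bar>fst x - fst z\<bar> \<le> h / 2" "\<bar>snd x - snd z\<bar> \<le> h / 2"
    unfolding abs_le_iff by (intro conjI; linarith)+
  then have "(fst x - fst z)^2 \<le> (h / 2)^2" "(snd x - snd z)^2 \<le> (h / 2)^2"
    by (metis abs_ge_zero power2_abs power_mono)+
  then have "dist x z \<le> sqrt (h^2 / 2)"
    by (simp add: dist_prod_def dist_real_def power_divide)
  also have "\<dots> = h / sqrt 2"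
    using assms(1) by (simp add: real_sqrt_divide)
  finally show ?thesis .
qed

lemma fH_le_of_mem_cellR:
  assumes "0 \<le> h" "Lf-lipschitz_on S f" "cellR h x \<subseteq> S" "\<And>z. z \<in> S \<Longrightarrow> 0 \<le> f z" "z \<in> cellR h x"
  shows "fH h Lf f x \<le> f z"
proof -
  have "x \<in> cellR h x" using assms(1) by (simp add: cellR_def mem_Times_iff)
  then have "f x - f z \<le> Lf * dist x z"
    using lipschitz_onD[OF assms(2)] assms(3,5) by (fastforce simp: dist_real_def)
  also have "\<dots> \<le> Lf * (h / sqrt 2)"
    using dist_le_of_mem_cellR[OF assms(1,5)] lipschitz_on_nonneg[OF assms(2)] by (rule mult_left_mono)
  finally have "f x - h * Lf / sqrt 2 \<le> f z" by (simp add: mult.commute)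
  moreover have "0 \<le> f z" using assms(3-5) by blast
  ultimately show ?thesis by (simp add: fH_def)
qed

lemma fH_le_integral_cellR:
  assumes "0 < h" "Lf-lipschitz_on S f" "cellR h x \<subseteq> S" "\<And>z. z \<in> S \<Longrightarrow> 0 \<le> f z"
  shows "h^2 * fH h Lf f x \<le> integral (cellR h x) f"
proof -
  have cbox: "cellR h x = cbox (fst x - h / 2, snd x - h / 2) (fst x + h / 2, snd x + h / 2)"
    by (simp add: cellR_def cbox_Pair_eq)
  have "continuous_on (cellR h x) f"
    using lipschitz_on_continuous_on[OF assms(2)] assms(3) by (rule continuous_on_subset)
  then have "f integrable_on cellR h x"
    unfolding cbox by (rule integrable_continuous)
  then have "integral (cellR h x) (\<lambda>_. fH h Lf f x) \<le> integral (cellR h x) f"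
    using fH_le_of_mem_cellR[OF less_imp_le[OF assms(1)] assms(2-4)]
    by (intro integral_le) (auto simp: cbox)
  then show ?thesis
    using assms(1) by (simp add: cbox content_Pair power2_eq_square)
qed

theorem mainTheorem15:
  fixes a1 a2 h Lf Lg :: real and K N :: nat and B :: "pt set"
    and f g u :: "pt \<Rightarrow> real" and x :: pt
  defines "X \<equiv> sqX a1 a2 h K"
  defines "G \<equiv> gridG a1 a2 h K B"
  assumes h_pos: "h > 0" and K_pos: "K \<ge> 1" and N_ge: "N \<ge> 2"
    and B_bdry: "B \<subseteq> frontier X" and B_fin: "finite B"
    and f_nonneg: "\<forall>z \<in> X. f z \<ge> 0" and f_lip: "Lf-lipschitz_on X f"
    and g_nonneg: "\<forall>y. g y \<ge> 0" and g_lip: "Lg-lipschitz_on UNIV g"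
    and u_convex: "convex_on (closure X) u"
    and u_pwaff: "piecewise_affine_on (closure X) u"
    and u_conc: "subgrad_set (closure X) u (X - G) \<in> null_sets lebesgue"
    and x_in: "x \<in> G \<inter> X"
  shows "F1 h G N Lf Lg f g u x
           \<le> (- integral (subgrad_set (closure X) u (cellR h x)) g + integral (cellR h x) f) / h^2"
proof -
  obtain i j where x: "x = (a1 + h * real i, a2 + h * real j)" and ij: "1 \<le> i" "i < K" "1 \<le> j" "j < K"
    using interior_gridG_point[OF h_pos B_bdry[unfolded X_def]] x_in unfolding X_def G_def by blast
  have nb: "x + hvec h (v1, v2) \<in> G \<and> x - hvec h (v1, v2) \<in> G" if "\<bar>v1\<bar> \<le> 1" "\<bar>v2\<bar> \<le> 1" for v1 v2
    using gridG_neighbour[OF x ij that] by (simp add: G_def)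
  have "((1, 0), (0, 1), (-1, -1)) \<in> admissible h G N x"
    using nb[of 1 0] nb[of 0 1] nb[of "- 1" "- 1"] by (intro standard_superbase_admissible[OF N_ge]) auto
  then obtain e e' e'' where adm: "(e, e', e'') \<in> admissible h G N x"
    and detH: "detH h G N u x = Gfun (max (Dee h u x e) 0) (max (Dee h u x e') 0) (max (Dee h u x e'') 0)"
    by (metis detH_attained empty_iff)
  define V where "V = {e, e', e'', (1, 0), (0, 1)}"
  have "x + hvec h v \<in> closure X \<and> x - hvec h v \<in> closure X" if "v \<in> V" for v
    using that adm nb[of 1 0] nb[of 0 1] gridG_subset_closure_sqX[OF h_pos K_pos B_bdry[unfolded X_def]]
    by (auto simp: V_def admissible_def X_def G_def)
  then have "subgrad_set (closure X) u (cellR h x) \<subseteq> stencil_polytope h u x V \<union> subgrad_set (closure X) u (X - G)"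
    using subgrad_subset_stencil_polytope subgrad_set_subset_isolated[OF cellR_subset_sqX[OF h_pos x ij]
        cellR_inter_gridG[OF h_pos B_bdry[unfolded X_def] x ij]]
    unfolding X_def G_def by blast
  then have "integral (subgrad_set (closure X) u (cellR h x)) g \<le> h^2 * (gH h Lg g u x * detH h G N u x)"
    unfolding detH using adm u_conc g_nonneg
    by (intro integral_le_gH_mul_Gfun[OF h_pos g_lip]) (auto simp: admissible_def V_def negligible_iff_null_sets)
  moreover have "h^2 * fH h Lf f x \<le> integral (cellR h x) f"
    using fH_le_integral_cellR[OF h_pos f_lip cellR_subset_sqX[OF h_pos x ij, folded X_def]] f_nonneg by blast
  ultimately have "F1 h G N Lf Lg f g u x * h^2
      \<le> - integral (subgrad_set (closure X) u (cellR h x)) g + integral (cellR h x) f"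
    by (simp add: F1_def algebra_simps)
  then show ?thesis
    using h_pos by (simp add: pos_le_divide_eq)
qed

end
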